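(* The family of operators $(T_u)_{u\ge 0}$ defined on $L$ by $(T_uf)(w)=\mathbb{E}\left[f\left(we^{-u}+\sigma(u)Z\right)\right]$, where $\sigma^2(u)=1-e^{-2u}$, is not strongly continuous on $(L,\|\cdot\|_L)$; that is, there exists $f\in L$ such that $\|T_uf-f\|_L$ does not converge to $0$ as $u\searrow 0$.
   Context: $D=D[0,1]$ denotes the space of all càdlàg functions $w:[0,1]\to\mathbb{R}$, and $\|\cdot\|$ denotes the supremum norm on $D$. $L$ is the set of all continuous functions $f:D\to\mathbb{R}$ such that $\sup_{w\in D}\frac{|f(w)|}{1+\|w\|^3}<\infty$, with norm $\|f\|_L=\sup_{w\in D}\frac{|f(w)|}{1+\|w\|^3}$. $Z$ denotes a standard Brownian motion on $[0,1]$, viewed as a random element of $D$. *)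

theory Defs
  imports "HOL-Probability.Probability"
begin

text \<open>Elements of D[0,1] are represented as functions real => real that are
  cadlag on [0,1] and (normalised to be) zero outside [0,1].\<close>

definition cadlag01 :: "(real \<Rightarrow> real) set" where
  "cadlag01 = {w. (\<forall>t. t \<notin> {0..1} \<longrightarrow> w t = 0)
      \<and> (\<forall>t\<in>{0..<1}. (w \<longlongrightarrow> w t) (at_right t))
      \<and> (\<forall>t\<in>{0<..1}. \<exists>l. (w \<longlongrightarrow> l) (at_left t))}"

definition supnorm :: "(real \<Rightarrow> real) \<Rightarrow> real" where
  "supnorm w = (SUP t\<in>{0..1}. \<bar>w t\<bar>)"

definition Lspace :: "((real \<Rightarrow> real) \<Rightarrow> real) set" where
  "Lspace = {f. (\<forall>w\<in>cadlag01. \<forall>e>0. \<exists>d>0. \<forall>v\<in>cadlag01.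
                   supnorm (\<lambda>t. v t - w t) < d \<longrightarrow> \<bar>f v - f w\<bar> < e)
             \<and> (\<exists>C. \<forall>w\<in>cadlag01. \<bar>f w\<bar> \<le> C * (1 + supnorm w ^ 3))}"

text \<open>The L-norm, valued in the extended reals (so it is meaningful even if infinite).\<close>
definition normL :: "((real \<Rightarrow> real) \<Rightarrow> real) \<Rightarrow> ereal" where
  "normL f = (SUP w\<in>cadlag01. ereal (\<bar>f w\<bar> / (1 + supnorm w ^ 3)))"

definition std_BM :: "'a measure \<Rightarrow> (real \<Rightarrow> 'a \<Rightarrow> real) \<Rightarrow> bool" where
  "std_BM M Z \<longleftrightarrow> prob_space M
     \<and> (\<forall>t\<in>{0..1}. Z t \<in> borel_measurable M)
     \<and> (\<forall>\<omega>\<in>space M. Z 0 \<omega> = 0 \<and> continuous_on {0..1} (\<lambda>t. Z t \<omega>))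
     \<and> (\<forall>s t. 0 \<le> s \<and> s < t \<and> t \<le> 1 \<longrightarrow>
          distributed M lborel (\<lambda>\<omega>. Z t \<omega> - Z s \<omega>) (normal_density 0 (sqrt (t - s))))
     \<and> (\<forall>ts. sorted_wrt (<) ts \<and> set ts \<subseteq> {0..1} \<longrightarrow>
          prob_space.indep_vars M (\<lambda>_. borel)
            (\<lambda>i \<omega>. Z (ts ! Suc i) \<omega> - Z (ts ! i) \<omega>) {..<length ts - 1})"

definition BMpath :: "(real \<Rightarrow> 'a \<Rightarrow> real) \<Rightarrow> 'a \<Rightarrow> real \<Rightarrow> real" where
  "BMpath Z \<omega> = (\<lambda>t. if t \<in> {0..1} then Z t \<omega> else 0)"

definition sigmaOU :: "real \<Rightarrow> real" where
  "sigmaOU u = sqrt (1 - exp (-2 * u))"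

definition OU_T :: "'a measure \<Rightarrow> (real \<Rightarrow> 'a \<Rightarrow> real) \<Rightarrow> real
     \<Rightarrow> ((real \<Rightarrow> real) \<Rightarrow> real) \<Rightarrow> (real \<Rightarrow> real) \<Rightarrow> real" where
  "OU_T M Z u f w = (\<integral>\<omega>. f (\<lambda>t. w t * exp (- u) + sigmaOU u * BMpath Z \<omega> t) \<partial>M)"

end

theory Submission
  imports Defs
begin

text \<open>Test with the functional f(w) = h(w(0)), h(x) = x^3 cos(2 pi x), which lies in L.
  Since Z starts at 0, (T_u f)(w) = h(w(0) e^{-u}). On the constant path k (k a positive
  integer) one has f = k^3, while for 1/2 \<le> e^{-u} < 1 the integer k can be chosen with
  k (1 - e^{-u}) \<in> [1/4, 3/4], which makes T_u f \<le> 0 there. Hence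
  \<bar>T_u f - f\<bar> / (1 + k^3) \<ge> k^3 / (1 + k^3) \<ge> 1/2, so \<parallel>T_u f - f\<parallel>_L \<ge> 1/2 for all small u > 0.\<close>

lemma compact_locally_bdd_above_imp_bdd_above:
  fixes f :: "'a::topological_space \<Rightarrow> real"
  assumes "compact S" and "\<And>x. x \<in> S \<Longrightarrow> \<exists>B. eventually (\<lambda>y. f y \<le> B) (nhds x)"
  shows "bdd_above (f ` S)"
proof -
  have "\<forall>x\<in>S. \<exists>U B. open U \<and> x \<in> U \<and> (\<forall>y\<in>U. f y \<le> B)"
    using assms(2) unfolding eventually_nhds by blast
  then obtain U B where U: "\<forall>x\<in>S. open (U x) \<and> x \<in> U x \<and> (\<forall>y\<in>U x. f y \<le> B x)"
    by metis
  obtain C where C: "C \<subseteq> S" "finite C" "S \<subseteq> (\<Union>c\<in>C. U c)"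
    by (rule compactE_image[OF \<open>compact S\<close>, of S U]) (use U in auto)
  have "f x \<le> Max (B ` C)" if "x \<in> S" for x
  proof -
    obtain c where "c \<in> C" "x \<in> U c" using C \<open>x \<in> S\<close> by blast
    hence "f x \<le> B c" using U C by blast
    also have "B c \<le> Max (B ` C)" using C \<open>c \<in> C\<close> by simp
    finally show ?thesis .
  qed
  thus ?thesis by (rule bdd_aboveI2)
qed

lemma eventually_abs_le_if_tendsto:
  fixes f :: "'a \<Rightarrow> real"
  assumes "(f \<longlongrightarrow> l) F"
  shows "eventually (\<lambda>x. \<bar>f x\<bar> \<le> \<bar>l\<bar> + 1) F"
  using tendstoD[OF assms zero_less_one] by eventually_elim (auto simp: dist_real_def)

lemma cadlag01_locally_bounded:
  assumes w: "w \<in> cadlag01" and t: "t \<in> {0..1}"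
  shows "\<exists>B. eventually (\<lambda>s. \<bar>w s\<bar> \<le> B) (nhds t)"
proof -
  have vanish: "w s = 0" if "s \<notin> {0..1}" for s
    using w that unfolding cadlag01_def by blast
  obtain B1 where B1: "eventually (\<lambda>s. \<bar>w s\<bar> \<le> B1) (at_right t)"
  proof (cases "t < 1")
    case True
    with w t have "(w \<longlongrightarrow> w t) (at_right t)" unfolding cadlag01_def by auto
    thus ?thesis using eventually_abs_le_if_tendsto that by blast
  next
    case False
    have "eventually (\<lambda>s. \<bar>w s\<bar> \<le> 0) (at_right t)"
      unfolding eventually_at_right_field using False t by (intro exI[of _ "2"]) (auto simp: vanish)
    thus ?thesis using that by blast
  qed
  obtain B2 where B2: "eventually (\<lambda>s. \<bar>w s\<bar> \<le> B2) (at_left t)"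
  proof (cases "0 < t")
    case True
    with t have "t \<in> {0<..1}" by simp
    with w obtain l where "(w \<longlongrightarrow> l) (at_left t)" unfolding cadlag01_def by blast
    thus ?thesis using eventually_abs_le_if_tendsto that by blast
  next
    case False
    have "eventually (\<lambda>s. \<bar>w s\<bar> \<le> 0) (at_left t)"
      unfolding eventually_at_left_field using False t by (intro exI[of _ "-1"]) (auto simp: vanish)
    thus ?thesis using that by blast
  qed
  have "eventually (\<lambda>s. \<bar>w s\<bar> \<le> max (max B1 B2) \<bar>w t\<bar>) (nhds t)"
    unfolding eventually_nhds_conv_at eventually_at_split
    using B1 B2 by (auto elim!: eventually_mono)
  thus ?thesis by blast
qed

lemma abs_le_supnorm:
  assumes w: "w \<in> cadlag01" and t: "t \<in> {0..1}"
  shows "\<bar>w t\<bar> \<le> supnorm w"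
proof -
  have "bdd_above ((\<lambda>s. \<bar>w s\<bar>) ` {0..1})"
    using cadlag01_locally_bounded[OF w]
    by (intro compact_locally_bdd_above_imp_bdd_above) auto
  thus ?thesis unfolding supnorm_def using t by (rule cSUP_upper2) simp
qed

lemma cadlag01_diff:
  assumes "v \<in> cadlag01" and "w \<in> cadlag01"
  shows "(\<lambda>t. v t - w t) \<in> cadlag01"
  using assms unfolding cadlag01_def by (fastforce intro: tendsto_diff)

definition const_path :: "real \<Rightarrow> real \<Rightarrow> real" where
  "const_path x = (\<lambda>t. if t \<in> {0..1} then x else 0)"

lemma const_path_cadlag01: "const_path x \<in> cadlag01"
proof -
  have "(const_path x \<longlongrightarrow> const_path x t) (at_right t)" if "t \<in> {0..<1}" for t
  proof (rule tendsto_eventually)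
    show "eventually (\<lambda>s. const_path x s = const_path x t) (at_right t)"
      unfolding eventually_at_right_field using that
      by (intro exI[of _ 1]) (auto simp: const_path_def)
  qed
  moreover have "(const_path x \<longlongrightarrow> x) (at_left t)" if "t \<in> {0<..1}" for t
  proof (rule tendsto_eventually)
    show "eventually (\<lambda>s. const_path x s = x) (at_left t)"
      unfolding eventually_at_left_field using that
      by (intro exI[of _ 0]) (auto simp: const_path_def)
  qed
  moreover have "\<forall>t. t \<notin> {0..1} \<longrightarrow> const_path x t = 0"
    by (simp add: const_path_def)
  ultimately show ?thesis
    unfolding cadlag01_def by blast
qed

lemma supnorm_const_path: "supnorm (const_path x) = \<bar>x\<bar>"
proof -
  have "supnorm (const_path x) = (SUP t\<in>{0..1::real}. \<bar>x\<bar>)"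
    unfolding supnorm_def by (intro SUP_cong) (auto simp: const_path_def)
  thus ?thesis by simp
qed

lemma eval_zero_in_Lspace:
  assumes cont: "continuous_on UNIV g" and growth: "\<And>x. \<bar>g x\<bar> \<le> C * (1 + \<bar>x\<bar> ^ 3)"
  shows "(\<lambda>w. g (w 0)) \<in> Lspace"
proof -
  have "\<exists>d>0. \<forall>v\<in>cadlag01. supnorm (\<lambda>t. v t - w t) < d \<longrightarrow> \<bar>g (v 0) - g (w 0)\<bar> < e"
    if w: "w \<in> cadlag01" and "e > 0" for w e
  proof -
    obtain d where "d > 0" and d: "\<And>y. dist y (w 0) < d \<Longrightarrow> dist (g y) (g (w 0)) < e"
      using cont \<open>e > 0\<close> unfolding continuous_on_iff by blast
    have "\<bar>g (v 0) - g (w 0)\<bar> < e"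
      if "v \<in> cadlag01" and "supnorm (\<lambda>t. v t - w t) < d" for v
      using abs_le_supnorm[OF cadlag01_diff[OF \<open>v \<in> cadlag01\<close> w], of 0] that d[of "v 0"]
      by (simp add: dist_real_def)
    with \<open>d > 0\<close> show ?thesis by blast
  qed
  moreover have "\<bar>g (w 0)\<bar> \<le> C * (1 + supnorm w ^ 3)" if "w \<in> cadlag01" for w
  proof -
    have "0 \<le> C" using growth[of 0] by simp
    have "\<bar>w 0\<bar> ^ 3 \<le> supnorm w ^ 3"
      using abs_le_supnorm[OF that, of 0] by (intro power_mono) auto
    hence "C * (1 + \<bar>w 0\<bar> ^ 3) \<le> C * (1 + supnorm w ^ 3)"
      using \<open>0 \<le> C\<close> by (intro mult_left_mono) auto
    with growth show ?thesis by (rule order_trans)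
  qed
  ultimately show ?thesis unfolding Lspace_def by blast
qed

lemma OU_T_eval_zero:
  assumes "std_BM M Z"
  shows "OU_T M Z u (\<lambda>w. g (w 0)) w = g (w 0 * exp (- u))"
proof -
  have "prob_space M" and Z0: "\<And>\<omega>. \<omega> \<in> space M \<Longrightarrow> Z 0 \<omega> = 0"
    using assms unfolding std_BM_def by blast+
  have "OU_T M Z u (\<lambda>w. g (w 0)) w = (\<integral>\<omega>. g (w 0 * exp (- u)) \<partial>M)"
    unfolding OU_T_def by (intro Bochner_Integration.integral_cong) (auto simp: BMpath_def Z0)
  also have "\<dots> = g (w 0 * exp (- u))"
    using \<open>prob_space M\<close> by (simp add: prob_space.prob_space)
  finally show ?thesis .
qed

definition cubic_wave :: "real \<Rightarrow> real" where
  "cubic_wave x = x ^ 3 * cos (2 * pi * x)"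

lemma cubic_wave_of_nat: "cubic_wave (real k) = real k ^ 3"
  using cos_int_2pin[of "int k"] by (simp add: cubic_wave_def)

lemma cubic_wave_in_Lspace: "(\<lambda>w. cubic_wave (w 0)) \<in> Lspace"
proof (rule eval_zero_in_Lspace)
  show "continuous_on UNIV cubic_wave"
    unfolding cubic_wave_def by (intro continuous_intros)
  show "\<bar>cubic_wave x\<bar> \<le> 1 * (1 + \<bar>x\<bar> ^ 3)" for x
  proof -
    have "\<bar>cubic_wave x\<bar> = \<bar>x\<bar> ^ 3 * \<bar>cos (2 * pi * x)\<bar>"
      by (simp add: cubic_wave_def abs_mult power_abs)
    also have "\<dots> \<le> \<bar>x\<bar> ^ 3" by (simp add: mult_left_le)
    finally show ?thesis by simp
  qed
qed

lemma cos_two_pi_nonpos: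
  assumes "1/4 \<le> y" "y \<le> 3/4"
  shows "cos (2 * pi * y) \<le> 0"
proof -
  have "0 \<le> cos (2 * pi * y - pi)"
    using assms pi_gt_zero by (intro cos_ge_zero) (auto simp: field_simps)
  thus ?thesis by (simp add: cos_diff)
qed

lemma exists_nat_cubic_wave_nonpos:
  assumes "1/2 \<le> c" "c < 1"
  shows "\<exists>k::nat. k \<ge> 1 \<and> cubic_wave (real k * c) \<le> 0"
proof -
  define a where "a = 1 - c"
  have a: "0 < a" "a \<le> 1/2" using assms by (auto simp: a_def)
  define b where "b = 1 / (4 * a)"
  have "0 < b" using a by (simp add: b_def)
  define k where "k = nat \<lceil>b\<rceil>"
  have "real k = of_int \<lceil>b\<rceil>" using \<open>0 < b\<close> by (simp add: k_def)
  hence k_lower: "b \<le> real k" and k_upper: "real k < b + 1"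
    using ceiling_correct[of b] by linarith+
  have "1/4 \<le> real k * a" using k_lower a by (simp add: b_def field_simps)
  moreover have "real k * a < 1/4 + a" using k_upper a by (simp add: b_def field_simps)
  ultimately have "cos (2 * pi * (real k * a)) \<le> 0" using a by (intro cos_two_pi_nonpos) auto
  \<comment> \<open>cos (2 pi k c) = cos (2 pi k - 2 pi k a) = cos (2 pi k a), as k is an integer\<close>
  moreover have "cos (2 * pi * (real k * c)) = cos (2 * pi * (real k * a))"
    using cos_diff[of "2 * pi * real k" "2 * pi * (real k * a)"] cos_int_2pin[of "int k"]
      sin_int_2pin[of "int k"]
    by (simp add: a_def algebra_simps)
  moreover have "0 \<le> (real k * c) ^ 3" using assms by simp
  moreover have "k \<ge> 1" using k_lower \<open>0 < b\<close> by simp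
  ultimately show ?thesis
    by (intro exI[of _ k]) (simp add: cubic_wave_def mult_nonneg_nonpos)
qed

lemma normL_OU_T_cubic_wave_ge:
  assumes BM: "std_BM M Z" and u: "0 < u" "u < ln 2"
  shows "ereal (1/2) \<le> normL (\<lambda>w. OU_T M Z u (\<lambda>w. cubic_wave (w 0)) w - cubic_wave (w 0))"
    (is "_ \<le> normL ?D")
proof -
  have "exp (- u) < 1" using u by simp
  moreover have "1/2 < exp (- u)"
    using u exp_less_mono[of "- ln 2" "- u"] by (simp add: exp_minus)
  ultimately obtain k :: nat where "k \<ge> 1" and k: "cubic_wave (real k * exp (- u)) \<le> 0"
    using exists_nat_cubic_wave_nonpos[of "exp (- u)"] by force
  define x where "x = real k"
  have "1 \<le> x ^ 3" using \<open>k \<ge> 1\<close> by (simp add: x_def)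
  have D: "?D (const_path x) = cubic_wave (x * exp (- u)) - x ^ 3"
    using OU_T_eval_zero[OF BM] cubic_wave_of_nat by (simp add: const_path_def x_def)
  have "1/2 \<le> x ^ 3 / (1 + x ^ 3)" using \<open>1 \<le> x ^ 3\<close> by (simp add: field_simps)
  also have "\<dots> \<le> \<bar>?D (const_path x)\<bar> / (1 + supnorm (const_path x) ^ 3)"
  proof -
    have "\<bar>x\<bar> = x" by (simp add: x_def)
    moreover have "x ^ 3 \<le> \<bar>cubic_wave (x * exp (- u)) - x ^ 3\<bar>"
      using k by (simp add: x_def)
    ultimately show ?thesis
      unfolding D supnorm_const_path by (simp add: divide_right_mono)
  qed
  finally have "ereal (1/2) \<le> ereal (\<bar>?D (const_path x)\<bar> / (1 + supnorm (const_path x) ^ 3))"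
    by simp
  also have "\<dots> \<le> normL ?D"
    unfolding normL_def by (rule SUP_upper[OF const_path_cadlag01])
  finally show ?thesis .
qed

theorem lemma1:
  fixes M :: "'a measure" and Z :: "real \<Rightarrow> 'a \<Rightarrow> real"
  assumes "std_BM M Z"
  shows "\<exists>f\<in>Lspace. \<not> ((\<lambda>u. normL (\<lambda>w. OU_T M Z u f w - f w)) \<longlongrightarrow> 0) (at_right 0)"
proof (intro bexI[OF _ cubic_wave_in_Lspace] notI)
  let ?N = "\<lambda>u. normL (\<lambda>w. OU_T M Z u (\<lambda>w. cubic_wave (w 0)) w - cubic_wave (w 0))"
  assume "(?N \<longlongrightarrow> 0) (at_right 0)"
  hence "eventually (\<lambda>u. ?N u < ereal (1/2)) (at_right 0)"
    by (rule order_tendstoD) (simp add: zero_ereal_def)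
  moreover have "eventually (\<lambda>u. ereal (1/2) \<le> ?N u) (at_right 0)"
    unfolding eventually_at_right_field
    by (intro exI[of _ "ln 2"]) (auto intro: normL_OU_T_cubic_wave_ge[OF assms])
  ultimately have "eventually (\<lambda>u::real. False) (at_right 0)"
    by eventually_elim auto
  thus False by simp
qed

end
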